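(* Let $G$ be a $2$-connected cubic multigraph, let $H$ be a peninsula of $G$ with internal port $p$, let $C$ be a core of $H$, and let $e\neq p$ be an edge of $C$. Then for every endpoint $x$ of $p$ there exists a path in $C$ that starts at $x$, does not use $p$, and has $e$ as its last edge.
   Context: Multigraphs are finite and loopless, parallel edges allowed; paths in $C$ may use virtual edges of $C$. A cut of a multigraph $M$ is a bipartition $(U,V(M)\setminus U)$; its cut-set is the set of edges between the sides. A tombolo-cut is a cut whose cut-set (tombolo) has exactly $2$ edges. For a tombolo-cut of $G$ with tombolo $\{a_1b_1,a_2b_2\}$, $a_1,a_2\in U$, the pairs $\{a_1,a_2\}$, $\{b_1,b_2\}$ are its port-pairs. A virtual subgraph of $G$ (on vertex set $X\subseteq V(G)$) is the multigraph on $X$ whose edges are all edges of $G$ with both ends in $X$ (real edges) plus one (possibly parallel) virtual edge $ab$ for every port-pair $\{a,b\}\subseteq X$ of a tombolo of $G$ both of whose edges are not edges of $G$ inside $X$. A peninsula is a virtual subgraph $H$ such that $(V(H),V(G)\setminus V(H))$ is a tombolo-cut, or $H=G$. The internal port of a peninsula $H\ne G$ is its unique virtual edge; if $H=G$ an arbitrary edge is fixed as internal port. A core of a peninsula $H$ with internal port $p=xy$ is obtained as follows: set $C_1=H$; while $C_i$ has a cut $(U,V(C_i)\setminus U)$ whose cut-set (in $C_i$) has exactly $2$ edges, neither of which is $p$, let $C_{i+1}$ be the virtual subgraph of $G$ on $U$ if $\{x,y\}\subseteq U$, and on $V(C_i)\setminus U$ otherwise; when no such cut exists, the current $C_i$ is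 a core. *)

theory Defs
  imports Main
begin

text \<open>A multigraph is given by a vertex set V, an edge set E (edge identities of type 'e)
  and an endpoint map ends; loopless means every edge has exactly two distinct ends.\<close>

definition multigraph :: "'v set \<Rightarrow> 'e set \<Rightarrow> ('e \<Rightarrow> 'v set) \<Rightarrow> bool" where
  "multigraph V E ends \<longleftrightarrow> finite V \<and> finite E \<and> (\<forall>e\<in>E. ends e \<subseteq> V \<and> card (ends e) = 2)"

definition degree :: "'e set \<Rightarrow> ('e \<Rightarrow> 'v set) \<Rightarrow> 'v \<Rightarrow> nat" where
  "degree E ends v = card {e\<in>E. v \<in> ends e}"

definition cubic :: "'v set \<Rightarrow> 'e set \<Rightarrow> ('e \<Rightarrow> 'v set) \<Rightarrow> bool" where
  "cubic V E ends \<longleftrightarrow> (\<forall>v\<in>V. degree E ends v = 3)"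

definition adj_in :: "'e set \<Rightarrow> ('e \<Rightarrow> 'v set) \<Rightarrow> 'v set \<Rightarrow> ('v \<times> 'v) set" where
  "adj_in E ends W = {(u, v). \<exists>e\<in>E. ends e = {u, v} \<and> ends e \<subseteq> W}"

definition connected_on :: "'e set \<Rightarrow> ('e \<Rightarrow> 'v set) \<Rightarrow> 'v set \<Rightarrow> bool" where
  "connected_on E ends W \<longleftrightarrow> W \<noteq> {} \<and> (\<forall>u\<in>W. \<forall>v\<in>W. (u, v) \<in> (adj_in E ends W)\<^sup>*)"

definition two_connected :: "'v set \<Rightarrow> 'e set \<Rightarrow> ('e \<Rightarrow> 'v set) \<Rightarrow> bool" where
  "two_connected V E ends \<longleftrightarrow> card V > 2 \<and> connected_on E ends V
     \<and> (\<forall>v\<in>V. connected_on E ends (V - {v}))"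

definition cut_set :: "'v set \<Rightarrow> 'e set \<Rightarrow> ('e \<Rightarrow> 'v set) \<Rightarrow> 'v set \<Rightarrow> 'e set" where
  "cut_set V E ends U = {e\<in>E. ends e \<inter> U \<noteq> {} \<and> ends e \<inter> (V - U) \<noteq> {}}"

definition tombolo_cut :: "'v set \<Rightarrow> 'e set \<Rightarrow> ('e \<Rightarrow> 'v set) \<Rightarrow> 'v set \<Rightarrow> bool" where
  "tombolo_cut V E ends U \<longleftrightarrow> U \<subseteq> V \<and> card (cut_set V E ends U) = 2"

definition port_pair :: "'v set \<Rightarrow> 'e set \<Rightarrow> ('e \<Rightarrow> 'v set) \<Rightarrow> 'e set \<Rightarrow> 'v set \<Rightarrow> bool" where
  "port_pair V E ends T P \<longleftrightarrow> (\<exists>U. tombolo_cut V E ends U \<and> cut_set V E ends U = T \<and>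
      (P = (\<Union>(ends ` T)) \<inter> U \<or> P = (\<Union>(ends ` T)) \<inter> (V - U)))"

text \<open>Edges of virtual subgraphs: real edges of G, or virtual edges, each virtual edge
  identified by its tombolo T and its port-pair P (its ends).\<close>
datatype ('e, 'v) vedge = Real 'e | Virt "'e set" "'v set"

fun vends :: "('e \<Rightarrow> 'v set) \<Rightarrow> ('e, 'v) vedge \<Rightarrow> 'v set" where
  "vends ends (Real e) = ends e"
| "vends ends (Virt T P) = P"

definition virtual_edges :: "'v set \<Rightarrow> 'e set \<Rightarrow> ('e \<Rightarrow> 'v set) \<Rightarrow> 'v set \<Rightarrow> ('e, 'v) vedge set" where
  "virtual_edges V E ends X =
     {Virt T P | T P. port_pair V E ends T P \<and> P \<subseteq> X \<and> (\<forall>f\<in>T. \<not> ends f \<subseteq> X)}"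

definition vsub_edges :: "'v set \<Rightarrow> 'e set \<Rightarrow> ('e \<Rightarrow> 'v set) \<Rightarrow> 'v set \<Rightarrow> ('e, 'v) vedge set" where
  "vsub_edges V E ends X = Real ` {e\<in>E. ends e \<subseteq> X} \<union> virtual_edges V E ends X"

definition peninsula :: "'v set \<Rightarrow> 'e set \<Rightarrow> ('e \<Rightarrow> 'v set) \<Rightarrow> 'v set \<Rightarrow> bool" where
  "peninsula V E ends X \<longleftrightarrow> tombolo_cut V E ends X \<or> X = V"

definition internal_port :: "'v set \<Rightarrow> 'e set \<Rightarrow> ('e \<Rightarrow> 'v set) \<Rightarrow> 'v set \<Rightarrow> ('e, 'v) vedge \<Rightarrow> bool" where
  "internal_port V E ends X p \<longleftrightarrow>
     (X = V \<and> p \<in> vsub_edges V E ends V) \<or> (X \<noteq> V \<and> virtual_edges V E ends X = {p})"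

definition vcut_set :: "'v set \<Rightarrow> 'e set \<Rightarrow> ('e \<Rightarrow> 'v set) \<Rightarrow> 'v set \<Rightarrow> 'v set \<Rightarrow> ('e, 'v) vedge set" where
  "vcut_set V E ends X U = {f\<in>vsub_edges V E ends X. vends ends f \<inter> U \<noteq> {} \<and> vends ends f \<inter> (X - U) \<noteq> {}}"

definition core_step :: "'v set \<Rightarrow> 'e set \<Rightarrow> ('e \<Rightarrow> 'v set) \<Rightarrow> ('e, 'v) vedge \<Rightarrow> 'v set \<Rightarrow> 'v set \<Rightarrow> bool" where
  "core_step V E ends p X Y \<longleftrightarrow> (\<exists>U. U \<subseteq> X \<and> card (vcut_set V E ends X U) = 2 \<and>
      p \<notin> vcut_set V E ends X U \<and>
      Y = (if vends ends p \<subseteq> U then U else X - U))"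

definition is_core :: "'v set \<Rightarrow> 'e set \<Rightarrow> ('e \<Rightarrow> 'v set) \<Rightarrow> ('e, 'v) vedge \<Rightarrow> 'v set \<Rightarrow> 'v set \<Rightarrow> bool" where
  "is_core V E ends p X Y \<longleftrightarrow> (core_step V E ends p)\<^sup>*\<^sup>* X Y \<and> (\<nexists>Z. core_step V E ends p Y Z)"

definition vpath :: "'v set \<Rightarrow> 'e set \<Rightarrow> ('e \<Rightarrow> 'v set) \<Rightarrow> 'v set \<Rightarrow> 'v list \<Rightarrow> ('e, 'v) vedge list \<Rightarrow> bool" where
  "vpath V E ends Y vs es \<longleftrightarrow> length vs = length es + 1 \<and> distinct vs \<and> set vs \<subseteq> Y \<and>
     (\<forall>i < length es. es ! i \<in> vsub_edges V E ends Y \<and> vends ends (es ! i) = {vs ! i, vs ! Suc i})"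

end

theory Submission
  imports Defs
begin

text \<open>Along the core construction the current vertex set W keeps the following shape: the
  vertices of G outside W split into disjoint tombolo sides, each attached to W through its
  outer port pair and represented in the virtual subgraph on W by one virtual edge. Adding to
  a set K of vertices of W all sides whose port pair meets K gives a vertex set of G whose cut
  has at most as many edges as the cut of K in the virtual subgraph: a cut edge leaving such a
  side is charged to the virtual edge of the side, and no side is charged twice. A 2-connected
  cubic multigraph has no cut with fewer than two edges, hence neither has the virtual
  subgraph on W. So it stays connected after deleting p, and a path avoiding p from an end of
  p to an end of e can be extended by e.\<close>

lemma rtrancl_leaves_set:
  assumes "(s, t) \<in> r\<^sup>*" "s \<in> S" "t \<notin> S"
  obtains u v where "(u, v) \<in> r" "u \<in> S" "v \<notin> S"
  using assms by (induction rule: rtrancl_induct) blast+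

definition vadj :: "('e \<Rightarrow> 'v set) \<Rightarrow> ('e, 'v) vedge set \<Rightarrow> ('v \<times> 'v) set" where
  "vadj ends F = {(a, b). \<exists>f\<in>F. vends ends f = {a, b}}"

lemma vends_subset:
  "f \<in> vsub_edges V E ends W \<Longrightarrow> vends ends f \<subseteq> W"
  unfolding vsub_edges_def virtual_edges_def by auto

lemma vpath_take:
  assumes "vpath V E ends Y vs es" "i < length vs"
  shows "vpath V E ends Y (take (Suc i) vs) (take i es)"
  using assms unfolding vpath_def by (auto simp: min_def dest: in_set_takeD)

lemma vpath_snoc:
  assumes "vpath V E ends Y vs es" "w \<notin> set vs" "w \<in> Y" "f \<in> vsub_edges V E ends Y"
    and "vends ends f = {last vs, w}"
  shows "vpath V E ends Y (vs @ [w]) (es @ [f])"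
proof -
  have len: "length vs = length es + 1" and "vs \<noteq> []"
    using assms(1) unfolding vpath_def by auto
  then have "last vs = vs ! length es" by (simp add: last_conv_nth)
  then show ?thesis
    using assms len unfolding vpath_def by (auto simp: nth_append less_Suc_eq)
qed

lemma vpath_from_rtrancl_vadj:
  assumes "(x, t) \<in> (vadj ends F)\<^sup>*" "x \<in> Y" "F \<subseteq> vsub_edges V E ends Y"
  shows "\<exists>vs es. vpath V E ends Y vs es \<and> hd vs = x \<and> last vs = t \<and> set es \<subseteq> F"
  using assms(1)
proof (induction rule: rtrancl_induct)
  case base
  have "vpath V E ends Y [x] []" using assms(2) unfolding vpath_def by simp
  then show ?case by fastforce
next
  case (step y z)
  obtain vs es where path: "vpath V E ends Y vs es" "hd vs = x" "last vs = y" "set es \<subseteq> F"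
    using step.IH by blast
  obtain f where f: "f \<in> F" "vends ends f = {y, z}"
    using step.hyps(2) unfolding vadj_def by blast
  have fY: "f \<in> vsub_edges V E ends Y" using f(1) assms(3) by blast
  have "vs \<noteq> []" using path(1) unfolding vpath_def by auto
  show ?case
  proof (cases "z \<in> set vs")
    case True
    then obtain i where i: "i < length vs" "vs ! i = z" by (auto simp: in_set_conv_nth)
    have "hd (take (Suc i) vs) = x" using path(2) by simp
    moreover have "last (take (Suc i) vs) = z" using i by (simp add: take_Suc_conv_app_nth)
    moreover have "set (take i es) \<subseteq> F" using path(4) by (auto dest: in_set_takeD)
    ultimately show ?thesis using vpath_take[OF path(1) i(1)] by blast
  next
    case False
    have "z \<in> Y" using vends_subset[OF fY] f(2) by auto
    then have "vpath V E ends Y (vs @ [z]) (es @ [f])"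
      using vpath_snoc[OF path(1) False _ fY] f(2) path(3) by simp
    then show ?thesis
      using path f(1) \<open>vs \<noteq> []\<close> by (intro exI[of _ "vs @ [z]"] exI[of _ "es @ [f]"]) auto
  qed
qed

text \<open>If the path already visits v, it is cut at v before e is appended.\<close>
lemma vpath_ending_with_edge:
  assumes path: "vpath V E ends Y vs es" "last vs = u"
    and e: "e \<in> vsub_edges V E ends Y" "vends ends e = {u, v}" "u \<noteq> v"
  shows "\<exists>vs' es'. vpath V E ends Y vs' es' \<and> hd vs' = hd vs \<and> es' \<noteq> [] \<and>
    set es' \<subseteq> insert e (set es) \<and> last es' = e"
proof -
  have "vs \<noteq> []" and dist: "distinct vs" using path(1) unfolding vpath_def by auto
  have "v \<in> Y" using vends_subset[OF e(1)] e(2) by auto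
  show ?thesis
  proof (cases "v \<in> set vs")
    case False
    have "vpath V E ends Y (vs @ [v]) (es @ [e])"
      using vpath_snoc[OF path(1) False \<open>v \<in> Y\<close> e(1)] e(2) path(2) by simp
    then show ?thesis
      using \<open>vs \<noteq> []\<close> by (intro exI[of _ "vs @ [v]"] exI[of _ "es @ [e]"]) auto
  next
    case True
    then obtain i where i: "i < length vs" "vs ! i = v" by (auto simp: in_set_conv_nth)
    have "Suc i < length vs"
      using i path(2) e(3) \<open>vs \<noteq> []\<close> by (metis last_conv_nth Suc_lessI diff_Suc_1)
    then have "u \<in> set (drop (Suc i) vs)"
      using path(2) by (metis Cons_nth_drop_Suc last_drop last_in_set list.distinct(1))
    then have "u \<notin> set (take (Suc i) vs)"
      using dist by (metis append_take_drop_id distinct_append disjoint_iff)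
    moreover have "last (take (Suc i) vs) = v" using i by (simp add: take_Suc_conv_app_nth)
    ultimately have "vpath V E ends Y (take (Suc i) vs @ [u]) (take i es @ [e])"
      using vpath_snoc[OF vpath_take[OF path(1) i(1)]] e vends_subset[OF e(1)]
      by (simp add: insert_commute)
    moreover have "hd (take (Suc i) vs @ [u]) = hd vs" using \<open>vs \<noteq> []\<close> by (cases vs) auto
    ultimately show ?thesis
      by (intro exI[of _ "take (Suc i) vs @ [u]"] exI[of _ "take i es @ [e]"])
        (auto dest: in_set_takeD)
  qed
qed

locale two_connected_cubic =
  fixes V :: "'v set" and E :: "'e set" and ends :: "'e \<Rightarrow> 'v set"
  assumes multigraph: "multigraph V E ends" and cubic: "cubic V E ends"
    and two_connected: "two_connected V E ends"
begin

abbreviation cut :: "'v set \<Rightarrow> 'e set" where "cut S \<equiv> cut_set V E ends S"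
abbreviation vsub :: "'v set \<Rightarrow> ('e, 'v) vedge set" where "vsub W \<equiv> vsub_edges V E ends W"
abbreviation vcut :: "'v set \<Rightarrow> 'v set \<Rightarrow> ('e, 'v) vedge set" where
  "vcut W K \<equiv> vcut_set V E ends W K"

definition outer_ports :: "'v set \<Rightarrow> 'v set" where
  "outer_ports B = \<Union>(ends ` cut B) \<inter> (V - B)"

lemma finite_V: "finite V" and finite_E: "finite E"
  using multigraph unfolding multigraph_def by auto

lemma ends_subset_V: "g \<in> E \<Longrightarrow> ends g \<subseteq> V"
  using multigraph unfolding multigraph_def by auto

lemma ends_doubleton: "g \<in> E \<Longrightarrow> \<exists>a b. a \<noteq> b \<and> ends g = {a, b}"
  using multigraph unfolding multigraph_def by (metis card_2_iff)

lemma cut_subset_E: "cut S \<subseteq> E"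
  unfolding cut_set_def by auto

lemma finite_cut: "finite (cut S)"
  using finite_subset[OF cut_subset_E finite_E] .

lemma cut_Diff: "cut (V - S) = cut S"
  unfolding cut_set_def using ends_subset_V by auto

lemma cut_edge_ends:
  assumes "g \<in> cut S"
  obtains c d where "ends g = {c, d}" "c \<in> S" "d \<in> V - S"
proof -
  have "g \<in> E" using assms cut_subset_E by auto
  then obtain a b where ab: "ends g = {a, b}" "{a, b} \<subseteq> V"
    using ends_doubleton ends_subset_V by metis
  have "{a, b} \<inter> S \<noteq> {}" "{a, b} \<inter> (V - S) \<noteq> {}"
    using assms ab(1) unfolding cut_set_def by auto
  then show ?thesis using that ab by blast
qed

lemma cut_outer_end:
  assumes "g \<in> cut B" "d \<in> ends g" "d \<notin> B"
  shows "ends g - B = {d}"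
  using assms by (elim cut_edge_ends) auto

text \<open>A cut with at most two edges all through one vertex a would make a a cut vertex,
  or, if a is alone on its side, give a degree below three.\<close>
lemma small_cut_avoids_vertex:
  assumes "S \<subseteq> V" "a \<in> S" "V - S \<noteq> {}" "card (cut S) \<le> 2"
  shows "\<exists>g\<in>cut S. a \<notin> ends g"
proof (rule ccontr)
  assume through_a: "\<not> (\<exists>g\<in>cut S. a \<notin> ends g)"
  show False
  proof (cases "S = {a}")
    case True
    have "g \<in> cut S" if g: "g \<in> E" "a \<in> ends g" for g
    proof -
      obtain b where "b \<in> ends g" "b \<noteq> a" using ends_doubleton[OF g(1)] by blast
      moreover have "ends g \<subseteq> V" using ends_subset_V[OF g(1)] .
      ultimately show ?thesis using g True unfolding cut_set_def by blast
    qed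
    then have "{g\<in>E. a \<in> ends g} \<subseteq> cut S" by blast
    then have "card {g\<in>E. a \<in> ends g} \<le> card (cut S)"
      using card_mono[OF finite_cut] by blast
    then have "card {g\<in>E. a \<in> ends g} \<le> 2" using assms(4) by linarith
    moreover have "card {g\<in>E. a \<in> ends g} = 3"
      using cubic assms(1,2) unfolding cubic_def degree_def by blast
    ultimately show False by simp
  next
    case False
    then obtain s where s: "s \<in> S" "s \<noteq> a" using assms(2) by blast
    obtain t where t: "t \<in> V - S" using assms(3) by blast
    have "connected_on E ends (V - {a})"
      using two_connected assms(1,2) unfolding two_connected_def by blast
    moreover have "s \<in> V - {a}" "t \<in> V - {a}" using s t assms(1,2) by auto
    ultimately have "(s, t) \<in> (adj_in E ends (V - {a}))\<^sup>*"
      unfolding connected_on_def by blast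
    moreover have "t \<notin> S" using t by blast
    ultimately obtain u v where "(u, v) \<in> adj_in E ends (V - {a})" "u \<in> S" "v \<notin> S"
      using s(1) by (elim rtrancl_leaves_set)
    then obtain g where "g \<in> E" "ends g = {u, v}" "ends g \<subseteq> V - {a}"
      unfolding adj_in_def by blast
    then have "g \<in> cut S" "a \<notin> ends g"
      using \<open>u \<in> S\<close> \<open>v \<notin> S\<close> unfolding cut_set_def by auto
    then show False using through_a \<open>a \<notin> ends g\<close> by blast
  qed
qed

lemma two_le_card_cut:
  assumes "S \<subseteq> V" "S \<noteq> {}" "V - S \<noteq> {}"
  shows "2 \<le> card (cut S)"
proof (rule ccontr)
  assume "\<not> 2 \<le> card (cut S)"
  then have small: "card (cut S) \<le> 2" and "card (cut S) \<le> 1" by auto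
  then consider "cut S = {}" | g where "cut S = {g}"
    using finite_cut by (metis card_0_eq card_1_singletonE le_SucE le_zero_eq One_nat_def)
  then show False
  proof cases
    case 1
    obtain a where "a \<in> S" using assms(2) by blast
    then show False using small_cut_avoids_vertex[OF assms(1) _ assms(3) small] 1 by blast
  next
    case (2 g)
    then obtain c where "c \<in> ends g" "c \<in> S" by (metis cut_edge_ends insertI1)
    then show False using small_cut_avoids_vertex[OF assms(1) _ assms(3) small] 2 by force
  qed
qed

lemma card_inner_ports:
  assumes "S \<subseteq> V" "card (cut S) = 2"
  shows "card (\<Union>(ends ` cut S) \<inter> S) = 2"
proof -
  obtain g1 g2 where g: "g1 \<noteq> g2" "cut S = {g1, g2}"
    using assms(2) by (auto simp: card_2_iff)
  obtain c1 d1 where 1: "ends g1 = {c1, d1}" "c1 \<in> S" "d1 \<in> V - S"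
    using g(2) cut_edge_ends by blast
  obtain c2 d2 where 2: "ends g2 = {c2, d2}" "c2 \<in> S" "d2 \<in> V - S"
    using g(2) cut_edge_ends by blast
  have "c1 \<noteq> c2"
    using small_cut_avoids_vertex[OF assms(1) 1(2)] 1 2 g assms(2) by auto
  moreover have "\<Union>(ends ` cut S) \<inter> S = {c1, c2}" using 1 2 g by auto
  ultimately show ?thesis by simp
qed

lemma card_outer_ports:
  assumes "S \<subseteq> V" "card (cut S) = 2"
  shows "card (outer_ports S) = 2"
  using card_inner_ports[of "V - S"] assms cut_Diff
  unfolding outer_ports_def by (simp add: double_diff)

lemma vsub_iff: "f \<in> vsub W \<longleftrightarrow> (\<exists>g. f = Real g \<and> g \<in> E \<and> ends g \<subseteq> W) \<or>
    (\<exists>T P. f = Virt T P \<and> port_pair V E ends T P \<and> P \<subseteq> W \<and> (\<forall>g\<in>T. \<not> ends g \<subseteq> W))"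
  unfolding vsub_edges_def virtual_edges_def by blast

lemma vends_card:
  assumes "f \<in> vsub W"
  shows "card (vends ends f) = 2"
proof (cases f)
  case (Real g)
  then show ?thesis using assms multigraph unfolding vsub_iff multigraph_def by auto
next
  case (Virt T P)
  then obtain U where U: "U \<subseteq> V" "card (cut U) = 2" "T = cut U"
      "P = \<Union>(ends ` T) \<inter> U \<or> P = outer_ports U"
    using assms unfolding vsub_iff port_pair_def tombolo_cut_def outer_ports_def by auto
  then show ?thesis using Virt card_inner_ports card_outer_ports by auto
qed

lemma vsub_mono:
  assumes "f \<in> vsub W" "vends ends f \<subseteq> W'" "W' \<subseteq> W"
  shows "f \<in> vsub W'"
  using assms unfolding vsub_iff by fastforce

lemma vcut_Diff:
  assumes "U \<subseteq> W"
  shows "vcut W (W - U) = vcut W U"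
  using assms unfolding vcut_set_def by (auto simp: double_diff)

lemma finite_vsub:
  assumes "W \<subseteq> V"
  shows "finite (vsub W)"
proof -
  have "virtual_edges V E ends W \<subseteq> case_prod Virt ` (Pow E \<times> Pow V)"
    using assms cut_subset_E
    unfolding virtual_edges_def port_pair_def by (auto simp: image_iff)
  then have "finite (virtual_edges V E ends W)"
    using finite_E finite_V by (meson finite_Pow_iff finite_SigmaI finite_imageI finite_subset)
  then show ?thesis unfolding vsub_edges_def using finite_E by simp
qed

lemma Virt_cut_in_vsub:
  assumes "B \<subseteq> V - W" "card (cut B) = 2" "outer_ports B \<subseteq> W"
  shows "Virt (cut B) (outer_ports B) \<in> vsub W"
proof -
  have "port_pair V E ends (cut B) (outer_ports B)"
    using assms(1,2) unfolding port_pair_def tombolo_cut_def outer_ports_def by blast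
  moreover have "\<not> ends g \<subseteq> W" if "g \<in> cut B" for g
    using that assms(1) by (elim cut_edge_ends) auto
  ultimately show ?thesis using assms(3) unfolding vsub_iff by blast
qed

lemma core_step_keeps_port:
  assumes "p \<in> vsub W" "core_step V E ends p W W'"
  shows "p \<in> vsub W'"
proof -
  obtain U where U: "U \<subseteq> W" "p \<notin> vcut W U" "W' = (if vends ends p \<subseteq> U then U else W - U)"
    using assms(2) unfolding core_step_def by blast
  have "vends ends p \<subseteq> W" using vends_subset[OF assms(1)] .
  then have "vends ends p \<subseteq> W'" using U assms(1) unfolding vcut_set_def by auto
  then show ?thesis using vsub_mono[OF assms(1)] U by auto
qed

end

locale tombolo_partition = two_connected_cubic V E ends
  for V :: "'v set" and E :: "'e set" and ends :: "'e \<Rightarrow> 'v set" +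
  fixes W :: "'v set" and BB :: "'v set set"
  assumes W_subset: "W \<subseteq> V"
    and block_subset: "B \<in> BB \<Longrightarrow> B \<subseteq> V - W"
    and card_cut_block: "B \<in> BB \<Longrightarrow> card (cut B) = 2"
    and outer_ports_block: "B \<in> BB \<Longrightarrow> outer_ports B \<subseteq> W"
    and blocks_disjoint: "B \<in> BB \<Longrightarrow> B' \<in> BB \<Longrightarrow> B \<noteq> B' \<Longrightarrow> B \<inter> B' = {}"
    and Union_blocks: "\<Union>BB = V - W"
begin

text \<open>The vertex set of G that K stands for in the virtual subgraph on W.\<close>
definition lift :: "'v set \<Rightarrow> 'v set" where
  "lift K = K \<union> \<Union>{B\<in>BB. outer_ports B \<inter> K \<noteq> {}}"

lemma subset_lift: "K \<subseteq> lift K"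
  unfolding lift_def by blast

lemma lift_subset_V: "K \<subseteq> W \<Longrightarrow> lift K \<subseteq> V"
  unfolding lift_def using W_subset block_subset by blast

lemma lift_Int_W: "K \<subseteq> W \<Longrightarrow> lift K \<inter> W = K"
  unfolding lift_def using block_subset by blast

lemma block_subset_lift: "B \<in> BB \<Longrightarrow> outer_ports B \<inter> K \<noteq> {} \<Longrightarrow> B \<subseteq> lift K"
  unfolding lift_def by blast

lemma block_Int_lift:
  assumes "K \<subseteq> W" "B \<in> BB" "outer_ports B \<inter> K = {}"
  shows "B \<inter> lift K = {}"
  using assms block_subset blocks_disjoint unfolding lift_def by blast

lemma cut_lift_outer_end:
  assumes K: "K \<subseteq> W" and g: "g \<in> cut (lift K)" "y \<in> ends g" "y \<notin> lift K"
  shows "y \<in> W - K"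
proof -
  obtain c d where cd: "ends g = {c, d}" "c \<in> lift K" "d \<in> V - lift K"
    using g(1) by (elim cut_edge_ends)
  then have "y \<in> V" using g(2,3) by auto
  have "y \<in> W"
  proof (rule ccontr)
    assume "y \<notin> W"
    then have "y \<in> \<Union>BB" using Union_blocks \<open>y \<in> V\<close> by simp
    then obtain B where B: "B \<in> BB" "y \<in> B" by blast
    then have detached: "outer_ports B \<inter> K = {}" using block_subset_lift g(3) by blast
    then have "c \<notin> B" using block_Int_lift[OF K B(1)] cd(2) by blast
    moreover have "c \<in> V" using lift_subset_V[OF K] cd(2) by blast
    moreover have "g \<in> E" using g(1) cut_subset_E by blast
    ultimately have "g \<in> cut B" using cd(1) B(2) g(2) unfolding cut_set_def by blast
    then have "c \<in> outer_ports B"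
      using cd(1) \<open>c \<notin> B\<close> \<open>c \<in> V\<close> unfolding outer_ports_def by blast
    moreover have "c \<in> K"
      using outer_ports_block[OF B(1)] lift_Int_W[OF K] cd(2) \<open>c \<in> outer_ports B\<close> by blast
    ultimately show False using detached by blast
  qed
  then show ?thesis using g(3) unfolding lift_def by blast
qed

lemma cut_lift_through_block:
  assumes K: "K \<subseteq> W" and g: "g \<in> cut (lift K)" "\<not> ends g \<subseteq> W"
  obtains B d where "B \<in> BB" "outer_ports B \<inter> K \<noteq> {}" "g \<in> cut B" "d \<in> ends g" "d \<in> W - K"
proof -
  obtain c d where cd: "ends g = {c, d}" "c \<in> lift K" "d \<in> V - lift K"
    using g(1) by (elim cut_edge_ends)
  have d: "d \<in> W - K" using cut_lift_outer_end[OF K g(1)] cd by blast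
  then have "c \<notin> W" using g(2) cd(1) by auto
  then obtain B where B: "B \<in> BB" "c \<in> B"
    using Union_blocks lift_subset_V[OF K] cd(2) by blast
  then have "outer_ports B \<inter> K \<noteq> {}" using block_Int_lift[OF K] cd(2) by blast
  moreover have "g \<in> cut B"
    using B d cd block_subset g(1) cut_subset_E unfolding cut_set_def by blast
  ultimately show ?thesis using that B(1) d cd(1) by blast
qed

definition attached_block :: "'v set \<Rightarrow> 'e \<Rightarrow> 'v set" where
  "attached_block K g = (SOME B. B \<in> BB \<and> outer_ports B \<inter> K \<noteq> {} \<and> g \<in> cut B)"

definition contract :: "'v set \<Rightarrow> 'e \<Rightarrow> ('e, 'v) vedge" where
  "contract K g = (if ends g \<subseteq> W then Real g
     else Virt (cut (attached_block K g)) (outer_ports (attached_block K g)))"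

lemma attached_blockE:
  assumes "K \<subseteq> W" "g \<in> cut (lift K)" "\<not> ends g \<subseteq> W"
  obtains d where "attached_block K g \<in> BB" "outer_ports (attached_block K g) \<inter> K \<noteq> {}"
    "g \<in> cut (attached_block K g)" "d \<in> ends g" "d \<in> W - K"
proof -
  obtain B d where "B \<in> BB" "outer_ports B \<inter> K \<noteq> {}" "g \<in> cut B" "d \<in> ends g" "d \<in> W - K"
    using cut_lift_through_block[OF assms] .
  then show ?thesis
    using that someI[of "\<lambda>B. B \<in> BB \<and> outer_ports B \<inter> K \<noteq> {} \<and> g \<in> cut B"]
    unfolding attached_block_def by blast
qed

lemma contract_in_vcut:
  assumes K: "K \<subseteq> W" and g: "g \<in> cut (lift K)"
  shows "contract K g \<in> vcut W K"
proof (cases "ends g \<subseteq> W")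
  case True
  moreover have "g \<in> E" using g cut_subset_E by blast
  moreover have "ends g \<inter> K \<noteq> {}" "ends g \<inter> (W - K) \<noteq> {}"
    using g True lift_Int_W[OF K] unfolding cut_set_def by auto
  ultimately show ?thesis unfolding contract_def vcut_set_def vsub_iff by auto
next
  case False
  then obtain d where B: "attached_block K g \<in> BB" "outer_ports (attached_block K g) \<inter> K \<noteq> {}"
      "g \<in> cut (attached_block K g)" "d \<in> ends g" "d \<in> W - K"
    using attached_blockE[OF K g] by blast
  then have "d \<in> outer_ports (attached_block K g)"
    using block_subset[OF B(1)] W_subset unfolding outer_ports_def by blast
  moreover have "Virt (cut (attached_block K g)) (outer_ports (attached_block K g)) \<in> vsub W"
    using B(1) block_subset card_cut_block outer_ports_block by (intro Virt_cut_in_vsub)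
  ultimately show ?thesis using False B(2,5) unfolding contract_def vcut_set_def by auto
qed

text \<open>Two cut edges leaving the same attached block B would both have their outer end
  in W - K, whereas the outer port pair of B meets K.\<close>
lemma inj_on_contract:
  assumes K: "K \<subseteq> W"
  shows "inj_on (contract K) (cut (lift K))"
proof
  fix g1 g2 assume g: "g1 \<in> cut (lift K)" "g2 \<in> cut (lift K)" "contract K g1 = contract K g2"
  show "g1 = g2"
  proof (cases "ends g1 \<subseteq> W")
    case True
    then show ?thesis using g(3) unfolding contract_def by (auto split: if_splits)
  next
    case False
    then have "\<not> ends g2 \<subseteq> W" using g(3) unfolding contract_def by (auto split: if_splits)
    define B where "B = attached_block K g1"
    obtain d1 where 1: "B \<in> BB" "outer_ports B \<inter> K \<noteq> {}" "g1 \<in> cut B" "d1 \<in> ends g1"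
        "d1 \<in> W - K"
      using attached_blockE[OF K g(1) False] unfolding B_def by blast
    obtain d2 where 2: "g2 \<in> cut (attached_block K g2)" "d2 \<in> ends g2" "d2 \<in> W - K"
      using attached_blockE[OF K g(2) \<open>\<not> ends g2 \<subseteq> W\<close>] by blast
    have "cut (attached_block K g2) = cut B" "outer_ports (attached_block K g2) = outer_ports B"
      using g(3) False \<open>\<not> ends g2 \<subseteq> W\<close> unfolding contract_def B_def by auto
    then have g2B: "g2 \<in> cut B" using 2(1) by simp
    show "g1 = g2"
    proof (rule ccontr)
      assume "g1 \<noteq> g2"
      then have "cut B = {g1, g2}"
        using 1(3) g2B card_cut_block[OF 1(1)] finite_cut
        by (metis card_2_iff card_subset_eq empty_subsetI insert_subset)
      moreover have "ends g1 - B = {d1}" "ends g2 - B = {d2}"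
        using cut_outer_end 1(3,4,5) g2B 2(2,3) block_subset[OF 1(1)] by blast+
      ultimately have "outer_ports B \<subseteq> W - K"
        using 1(5) 2(3) unfolding outer_ports_def by auto
      then show False using 1(2) by blast
    qed
  qed
qed

lemma card_cut_lift_le:
  assumes "K \<subseteq> W"
  shows "card (cut (lift K)) \<le> card (vcut W K)"
proof (rule card_inj_on_le[OF inj_on_contract[OF assms]])
  show "contract K ` cut (lift K) \<subseteq> vcut W K" using contract_in_vcut[OF assms] by blast
  show "finite (vcut W K)" using finite_vsub[OF W_subset] unfolding vcut_set_def by simp
qed

lemma two_le_card_vcut:
  assumes "K \<subseteq> W" "K \<noteq> {}" "W - K \<noteq> {}"
  shows "2 \<le> card (vcut W K)"
proof -
  have "K \<subseteq> lift K" by (rule subset_lift)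
  moreover have "W - K \<subseteq> V - lift K" using lift_Int_W[OF assms(1)] W_subset by blast
  ultimately have "2 \<le> card (cut (lift K))"
    using assms lift_subset_V by (intro two_le_card_cut) auto
  then show ?thesis using card_cut_lift_le[OF assms(1)] by linarith
qed

lemma vsub_Diff_edge_connected:
  assumes "x \<in> W" "u \<in> W"
  shows "(x, u) \<in> (vadj ends (vsub W - {p}))\<^sup>*"
proof (rule ccontr)
  assume not_reached: "(x, u) \<notin> (vadj ends (vsub W - {p}))\<^sup>*"
  define R where "R = {w \<in> W. (x, w) \<in> (vadj ends (vsub W - {p}))\<^sup>*}"
  have "vcut W R \<subseteq> {p}"
  proof
    fix f assume "f \<in> vcut W R"
    then obtain a b where f: "f \<in> vsub W" "a \<in> vends ends f" "a \<in> R" "b \<in> vends ends f" "b \<in> W - R"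
      unfolding vcut_set_def by blast
    then have "vends ends f = {a, b}" using vends_card[OF f(1)] by (auto simp: card_2_iff)
    show "f \<in> {p}"
    proof (rule ccontr)
      assume "f \<notin> {p}"
      then have "(a, b) \<in> vadj ends (vsub W - {p})"
        using f(1) \<open>vends ends f = {a, b}\<close> unfolding vadj_def by blast
      then show False using f(3,5) unfolding R_def by (auto intro: rtrancl_into_rtrancl)
    qed
  qed
  then have "card (vcut W R) \<le> 1" using card_mono[of "{p}" "vcut W R"] by simp
  moreover have "2 \<le> card (vcut W R)"
    using assms not_reached by (intro two_le_card_vcut) (auto simp: R_def)
  ultimately show False by simp
qed

lemma lift_tombolo_side:
  assumes Z: "Z \<subseteq> W" "card (vcut W Z) = 2"
  shows "card (cut (lift Z)) = 2" "outer_ports (lift Z) \<subseteq> W - Z"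
proof -
  have "vcut W Z \<noteq> {}" using Z(2) by auto
  then have "Z \<noteq> {}" "W - Z \<noteq> {}" unfolding vcut_set_def by auto
  moreover have "W - Z \<subseteq> V - lift Z" using lift_Int_W[OF Z(1)] W_subset by blast
  ultimately have "2 \<le> card (cut (lift Z))"
    using lift_subset_V[OF Z(1)] subset_lift[of Z] by (intro two_le_card_cut) auto
  then show "card (cut (lift Z)) = 2" using card_cut_lift_le[OF Z(1)] Z(2) by simp
  show "outer_ports (lift Z) \<subseteq> W - Z"
    using cut_lift_outer_end[OF Z(1)] unfolding outer_ports_def by blast
qed

lemma tombolo_partition_Diff:
  assumes Z: "Z \<subseteq> W" "card (vcut W Z) = 2"
  shows "tombolo_partition V E ends (W - Z) (insert (lift Z) {B\<in>BB. outer_ports B \<inter> Z = {}})"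
proof -
  let ?BB' = "insert (lift Z) {B\<in>BB. outer_ports B \<inter> Z = {}}"
  have lift_Z: "lift Z \<subseteq> V" "lift Z \<inter> (W - Z) = {}"
    using lift_subset_V[OF Z(1)] lift_Int_W[OF Z(1)] by auto
  have blocks': "B \<subseteq> V - (W - Z) \<and> card (cut B) = 2 \<and> outer_ports B \<subseteq> W - Z"
    if B: "B \<in> ?BB'" for B
  proof -
    consider "B = lift Z" | "B \<in> BB" "outer_ports B \<inter> Z = {}" using B by blast
    then show ?thesis
    proof cases
      case 1
      then show ?thesis using lift_Z lift_tombolo_side[OF Z] by blast
    next
      case 2
      then show ?thesis using block_subset card_cut_block outer_ports_block by blast
    qed
  qed
  have disjoint': "B \<inter> B' = {}" if "B \<in> ?BB'" "B' \<in> ?BB'" "B \<noteq> B'" for B B'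
    using that blocks_disjoint block_Int_lift[OF Z(1)] by (auto simp: Int_commute)
  have "y \<in> \<Union>?BB'" if y: "y \<in> V - (W - Z)" for y
  proof (cases "y \<in> W")
    case True
    then show ?thesis using y subset_lift[of Z] by blast
  next
    case False
    then obtain B where "B \<in> BB" "y \<in> B" using y Union_blocks by auto
    then show ?thesis using block_subset_lift by (cases "outer_ports B \<inter> Z = {}") auto
  qed
  moreover have "\<Union>?BB' \<subseteq> V - (W - Z)" using blocks' by blast
  ultimately have Union': "\<Union>?BB' = V - (W - Z)" by blast
  show ?thesis
  proof (intro tombolo_partition.intro tombolo_partition_axioms.intro two_connected_cubic_axioms)
    show "W - Z \<subseteq> V" using W_subset by blast
    show "B \<subseteq> V - (W - Z)" "card (cut B) = 2" "outer_ports B \<subseteq> W - Z" if "B \<in> ?BB'" for B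
      using blocks'[OF that] by auto
    show "B \<inter> B' = {}" if "B \<in> ?BB'" "B' \<in> ?BB'" "B \<noteq> B'" for B B'
      using disjoint' that .
    show "\<Union>?BB' = V - (W - Z)" by (fact Union')
  qed
qed

lemma core_step_tombolo_partition:
  assumes "core_step V E ends p W W'"
  shows "\<exists>BB'. tombolo_partition V E ends W' BB'"
proof -
  obtain U where U: "U \<subseteq> W" "card (vcut W U) = 2" "W' = (if vends ends p \<subseteq> U then U else W - U)"
    using assms unfolding core_step_def by (elim exE conjE)
  define Z where "Z = W - W'"
  have "W' \<subseteq> W" using U(1,3) by (cases "vends ends p \<subseteq> U") simp_all
  then have Z: "Z \<subseteq> W" "W - Z = W'" unfolding Z_def by (simp_all add: double_diff)
  have "card (vcut W Z) = 2"
  proof (cases "vends ends p \<subseteq> U")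
    case True
    then have "Z = W - U" using U(3) unfolding Z_def by simp
    then show ?thesis using U(2) vcut_Diff[OF U(1)] by simp
  next
    case False
    then have "Z = U" using U(1,3) unfolding Z_def by (simp add: double_diff)
    then show ?thesis using U(2) by simp
  qed
  then have "tombolo_partition V E ends (W - Z) (insert (lift Z) {B\<in>BB. outer_ports B \<inter> Z = {}})"
    using Z(1) by (intro tombolo_partition_Diff)
  then show ?thesis unfolding Z(2) by blast
qed

end

context two_connected_cubic
begin

lemma peninsula_tombolo_partition:
  assumes "peninsula V E ends X"
  shows "\<exists>BB. tombolo_partition V E ends X BB"
proof (cases "X = V")
  case True
  have "tombolo_partition V E ends V {}"
    by (intro tombolo_partition.intro tombolo_partition_axioms.intro two_connected_cubic_axioms)
      simp_all
  then show ?thesis using True by blast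
next
  case False
  then have X: "X \<subseteq> V" "card (cut (V - X)) = 2"
    using assms cut_Diff unfolding peninsula_def tombolo_cut_def by auto
  have "outer_ports (V - X) \<subseteq> X" unfolding outer_ports_def by blast
  then have "tombolo_partition V E ends X {V - X}"
    using X by (intro tombolo_partition.intro tombolo_partition_axioms.intro two_connected_cubic_axioms)
      simp_all
  then show ?thesis by blast
qed

lemma core_construction_tombolo_partition:
  assumes "(core_step V E ends p)\<^sup>*\<^sup>* X Y" "tombolo_partition V E ends X BB" "p \<in> vsub X"
  shows "(\<exists>BB'. tombolo_partition V E ends Y BB') \<and> p \<in> vsub Y"
  using assms(1)
proof (induction rule: rtranclp_induct)
  case base
  then show ?case using assms(2,3) by blast
next
  case (step W W')
  then show ?case using tombolo_partition.core_step_tombolo_partition core_step_keeps_port by blast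
qed

end

theorem lemma20:
  fixes V :: "'v set" and E :: "'e set" and ends :: "'e \<Rightarrow> 'v set"
    and X Y :: "'v set" and p e :: "('e, 'v) vedge" and x :: 'v
  assumes "multigraph V E ends"
    and "cubic V E ends"
    and "two_connected V E ends"
    and "peninsula V E ends X"
    and "internal_port V E ends X p"
    and "is_core V E ends p X Y"
    and "e \<in> vsub_edges V E ends Y" and "e \<noteq> p"
    and "x \<in> vends ends p"
  shows "\<exists>vs es. vpath V E ends Y vs es \<and> hd vs = x \<and> es \<noteq> [] \<and> p \<notin> set es \<and> last es = e"
proof -
  interpret two_connected_cubic V E ends using assms(1-3) by unfold_locales
  have "p \<in> vsub X" using assms(5) unfolding internal_port_def vsub_edges_def by auto
  then obtain BB where partition: "tombolo_partition V E ends Y BB" and pY: "p \<in> vsub Y"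
    using core_construction_tombolo_partition peninsula_tombolo_partition[OF assms(4)] assms(6)
    unfolding is_core_def by blast
  interpret tombolo_partition V E ends Y BB by (fact partition)
  obtain u v where uv: "vends ends e = {u, v}" "u \<noteq> v"
    using vends_card[OF assms(7)] by (auto simp: card_2_iff)
  have "x \<in> Y" "u \<in> Y" using vends_subset[OF pY] vends_subset[OF assms(7)] assms(9) uv(1) by auto
  then obtain vs es where path: "vpath V E ends Y vs es" "hd vs = x" "last vs = u"
      "set es \<subseteq> vsub Y - {p}"
    using vpath_from_rtrancl_vadj[OF vsub_Diff_edge_connected] by blast
  then obtain vs' es' where "vpath V E ends Y vs' es'" "hd vs' = x" "es' \<noteq> []"
      "set es' \<subseteq> insert e (set es)" "last es' = e"
    using vpath_ending_with_edge[OF path(1,3) assms(7) uv] by blast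
  then show ?thesis using path(4) assms(8) by blast
qed

end
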